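(* Let $Y$ be a set and $1=1_Y$. Then $((1)^{\downarrow})_\ast=(1\cup 1_\Cup)_\ast=\Omega_Y^{\smile}$, and consequently $R^{\downarrow}=R\ast(1_Y)^{\downarrow}$ for every multirelation $R:X\leftrightarrow\mathcal{P}Y$.
   Context: A multirelation $R:X\leftrightarrow\mathcal{P}Y$ is a subset of $X\times\mathcal{P}(Y)$. $1_Y=\{(b,\{b\})\mid b\in Y\}:Y\leftrightarrow\mathcal{P}Y$ and here $1_\Cup=\{(b,\emptyset)\mid b\in Y\}$. $R^{\downarrow}=\{(a,A)\mid\exists B.\ (a,B)\in R\wedge A\subseteq B\}$. $\Omega_Y=\{(A,B)\mid A\subseteq B\subseteq Y\}$ and $\Omega_Y^{\smile}=\{(A,B)\mid B\subseteq A\subseteq Y\}$. The Peleg lifting of $R:X\leftrightarrow\mathcal{P}Y$ is $R_\ast=\{(A,B)\mid\exists f:X\to\mathcal{P}Y.\ (\forall a\in A.\ (a,f(a))\in R)\wedge B=\bigcup_{a\in A}f(a)\}:\mathcal{P}X\leftrightarrow\mathcal{P}Y$. The Peleg composition of $R:X\leftrightarrow\mathcal{P}Y$ and $S:Y\leftrightarrow\mathcal{P}Z$ is $R\ast S=\{(a,C)\mid\exists B.\ (a,B)\in R\wedge (B,C)\in S_\ast\}$. *)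

theory Defs
  imports Main
begin

text \<open>Multirelations R : X <-> P(Y) are modelled as sets of pairs (a, B) with
  a :: 'a and B :: 'b set; the sets X and Y are the universes of the types 'a, 'b.\<close>

type_synonym ('a,'b) mrel = "('a \<times> 'b set) set"

definition mid :: "('b,'b) mrel" where
  "mid = {(b, {b}) | b. True}"

definition mcup :: "('b,'b) mrel" where
  "mcup = {(b, {}) | b. True}"

definition down :: "('a,'b) mrel \<Rightarrow> ('a,'b) mrel" where
  "down R = {(a, A) | a A. \<exists>B. (a, B) \<in> R \<and> A \<subseteq> B}"

definition Omega :: "('b set \<times> 'b set) set" where
  "Omega = {(A, B). A \<subseteq> B}"

definition Omega_conv :: "('b set \<times> 'b set) set" where
  "Omega_conv = {(A, B). B \<subseteq> A}"

definition peleg_lift :: "('a,'b) mrel \<Rightarrow> ('a set \<times> 'b set) set" where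
  "peleg_lift R = {(A, B) | A B. \<exists>f :: 'a \<Rightarrow> 'b set.
       (\<forall>a\<in>A. (a, f a) \<in> R) \<and> B = (\<Union>a\<in>A. f a)}"

definition peleg_comp :: "('a,'b) mrel \<Rightarrow> ('b,'c) mrel \<Rightarrow> ('a,'c) mrel" where
  "peleg_comp R S = {(a, C) | a C. \<exists>B. (a, B) \<in> R \<and> (B, C) \<in> peleg_lift S}"

end

theory Submission
  imports Defs
begin

text \<open>The only subsets of a singleton are itself and the empty set, so the down-closure of
  \<open>1\<close> is \<open>1 \<union> 1\<^sub>\<Cup>\<close>. A choice function for \<open>1 \<union> 1\<^sub>\<Cup>\<close> on a set \<open>A\<close> decides for each
  \<open>a \<in> A\<close> whether to keep it, so the unions it produces are exactly the subsets of \<open>A\<close>: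
  the Peleg lifting is \<open>\<Omega>\<^sup>\<smile>\<close>. Peleg composition with a multirelation whose lifting is \<open>\<Omega>\<^sup>\<smile>\<close>
  just shrinks the outputs of \<open>R\<close> to arbitrary subsets, which is \<open>R\<^sup>\<down>\<close>.\<close>

lemma down_mid: "down mid = mid \<union> mcup"
  unfolding down_def mid_def mcup_def by (auto simp: subset_singleton_iff)

lemma peleg_lift_mid_Un_mcup: "peleg_lift (mid \<union> mcup) = Omega_conv"
proof (intro set_eqI iffI)
  fix p assume "p \<in> peleg_lift (mid \<union> mcup)"
  then obtain A B f where p: "p = (A, B)" and f: "\<forall>a\<in>A. (a, f a) \<in> mid \<union> mcup"
    and B: "B = (\<Union>a\<in>A. f a)"
    unfolding peleg_lift_def by blast
  have "\<forall>a\<in>A. f a \<subseteq> {a}"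
    using f unfolding mid_def mcup_def by auto
  then show "p \<in> Omega_conv"
    using p B unfolding Omega_conv_def by auto
next
  fix p assume "p \<in> (Omega_conv :: ('b set \<times> 'b set) set)"
  then obtain A B :: "'b set" where p: "p = (A, B)" and "B \<subseteq> A"
    unfolding Omega_conv_def by auto
  define f where "f a = (if a \<in> B then {a} else {})" for a
  have "\<forall>a\<in>A. (a, f a) \<in> mid \<union> mcup"
    unfolding f_def mid_def mcup_def by auto
  moreover have "B = (\<Union>a\<in>A. f a)"
    using \<open>B \<subseteq> A\<close> unfolding f_def by auto
  ultimately show "p \<in> peleg_lift (mid \<union> mcup)"
    unfolding peleg_lift_def p by blast
qed

lemma peleg_comp_eq_down:
  assumes "peleg_lift S = Omega_conv"
  shows "peleg_comp R S = down R"
  unfolding peleg_comp_def assms by (auto simp: down_def Omega_conv_def)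

theorem lemma4p6:
  shows "peleg_lift (down (mid :: ('b,'b) mrel)) = peleg_lift (mid \<union> mcup)
       \<and> peleg_lift (mid \<union> mcup) = (Omega_conv :: ('b set \<times> 'b set) set)
       \<and> (\<forall>R :: ('a,'b) mrel. down R = peleg_comp R (down mid))"
  using down_mid peleg_lift_mid_Un_mcup peleg_comp_eq_down by metis

end
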